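(* Let $T(n)=(3n+1)/2^{v_2(3n+1)}$ be the Syracuse map. For an odd positive integer $n$, let $L=v_2(n+1)-1$, let $r=v_2(3T^L(n)+1)$, and let $n'=T^{L+1}(n)$. Then $$\log_2\frac{n'}{n}=X(n)+C(n),\qquad X(n)=(L+1)\log_2 3-(L+r),\qquad C(n)=\log_2\!\Bigl(1+\frac{1-(2/3)^{L+1}}{n}\Bigr).$$ The correction satisfies $0<C(n)<\log_2(1+1/n)$, and (for fixed $L$) $C(n)$ is monotonically decreasing in $n$.
   Context: $v_2$ is the $2$-adic valuation, $T^j$ the $j$-th iterate of $T$. *)

theory Defs
  imports Complex_Main "HOL-Computational_Algebra.Primes"
begin

definition v2 :: "nat \<Rightarrow> nat" where
  "v2 k = multiplicity (2::nat) k"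

definition syracuse :: "nat \<Rightarrow> nat" where
  "syracuse k = (3 * k + 1) div 2 ^ v2 (3 * k + 1)"

definition syrX :: "nat \<Rightarrow> nat \<Rightarrow> real" where
  "syrX L r = real (L + 1) * log 2 3 - real (L + r)"

definition syrC :: "nat \<Rightarrow> nat \<Rightarrow> real" where
  "syrC L k = log 2 (1 + (1 - (2/3) ^ (L + 1)) / real k)"

end

theory Submission
  imports Defs
begin

text \<open>
  Since \<open>2^(L+1)\<close> divides \<open>n + 1\<close>, each of the first \<open>L\<close> iterates is \<open>3 mod 4\<close>, so each
  of the first \<open>L\<close> steps is \<open>m \<mapsto> (3m+1)/2\<close>, i.e. multiplies \<open>m + 1\<close> by \<open>3/2\<close>; hence
  \<open>2^L (T^L n + 1) = 3^L (n + 1)\<close>. The next step divides \<open>3 T^L n + 1\<close> by \<open>2^r\<close>, giving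
  the exact identity \<open>2^(L+r) n' + 2^(L+1) = 3^(L+1) (n + 1)\<close>. Dividing by \<open>2^(L+r) n\<close> and
  taking logarithms yields \<open>X(n) + C(n)\<close>; the bounds on \<open>C\<close> only use
  \<open>0 < 1 - (2/3)^(L+1) < 1\<close>.
\<close>

lemma v2_eq_1_if_mod_4: "x mod 4 = 2 \<Longrightarrow> v2 x = 1"
  unfolding v2_def
proof (rule multiplicity_eqI)
  assume "x mod 4 = 2"
  then show "(2::nat) ^ 1 dvd x" and "\<not> (2::nat) ^ Suc 1 dvd x"
    by simp_all presburger+
qed

lemma syracuse_mult_power_v2: "syracuse k * 2 ^ v2 (3 * k + 1) = 3 * k + 1"
  unfolding syracuse_def v2_def by (simp add: multiplicity_dvd)

lemma syracuse_plus_one_if_4_dvd: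
  assumes "4 dvd m + 1"
  shows "2 * (syracuse m + 1) = 3 * (m + 1)"
proof -
  have "(3 * m + 1) mod 4 = 2" using assms by presburger
  then have "v2 (3 * m + 1) = 1" by (rule v2_eq_1_if_mod_4)
  then have "syracuse m * 2 = 3 * m + 1" using syracuse_mult_power_v2[of m] by simp
  then show ?thesis by simp
qed

lemma syracuse_iterate_plus_one:
  assumes "2 ^ (L + 1) dvd n + 1" and "j \<le> L"
  shows "2 ^ j * ((syracuse ^^ j) n + 1) = 3 ^ j * (n + 1)"
  using assms(2)
proof (induction j)
  case 0
  then show ?case by simp
next
  case (Suc j)
  define m where "m = (syracuse ^^ j) n"
  have IH: "2 ^ j * (m + 1) = 3 ^ j * (n + 1)"
    using Suc unfolding m_def by simp
  have "(2::nat) ^ (j + 2) dvd 2 ^ (L + 1)"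
    using Suc.prems by (intro le_imp_power_dvd) simp
  from dvd_trans[OF this assms(1)] have "2 ^ j * 4 dvd n + 1"
    by (simp add: power_add mult.commute)
  then have "2 ^ j * 4 dvd 3 ^ j * (n + 1)"
    by (rule dvd_mult)
  then have "4 dvd m + 1"
    unfolding IH[symmetric] by (simp only: nat_mult_dvd_cancel_disj) simp
  then have "2 * (syracuse m + 1) = 3 * (m + 1)"
    by (rule syracuse_plus_one_if_4_dvd)
  then have "2 ^ Suc j * (syracuse m + 1) = 3 * (2 ^ j * (m + 1))"
    by (metis mult.assoc mult.left_commute power_Suc2)
  also have "\<dots> = 3 ^ Suc j * (n + 1)"
    unfolding IH by simp
  finally show ?case
    unfolding m_def by simp
qed

lemma syracuse_iterate_closed_form:
  assumes "2 ^ (L + 1) dvd n + 1"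
  defines "r \<equiv> v2 (3 * (syracuse ^^ L) n + 1)"
  shows "(syracuse ^^ (L + 1)) n * 2 ^ (L + r) + 2 ^ (L + 1) = 3 ^ (L + 1) * (n + 1)"
proof -
  define M where "M = (syracuse ^^ L) n"
  have "(syracuse ^^ (L + 1)) n * 2 ^ r = 3 * M + 1"
    using syracuse_mult_power_v2[of M] unfolding M_def r_def by simp
  then have "(syracuse ^^ (L + 1)) n * 2 ^ (L + r) = 2 ^ L * (3 * M + 1)"
    by (metis mult.assoc mult.commute power_add)
  moreover have "2 ^ L * (M + 1) = 3 ^ L * (n + 1)"
    unfolding M_def using syracuse_iterate_plus_one[OF assms(1) order.refl] .
  ultimately show ?thesis
    by (simp add: algebra_simps)
qed

lemma log_power_div_power_eq_syrX: "log 2 (3 ^ (L + 1) / 2 ^ (L + r)) = syrX L r"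
proof -
  have "log 2 ((3::real) ^ (L + 1)) = real (L + 1) * log 2 3"
    by (rule log_nat_power) simp
  moreover have "log 2 ((2::real) ^ (L + r)) = real (L + r)"
    by (simp add: log_nat_power)
  ultimately show ?thesis
    unfolding syrX_def by (subst log_divide) simp_all
qed

lemma log_one_plus_div_pos:
  fixes b c x :: real
  assumes "1 < b" "0 < c" "0 < x"
  shows "0 < log b (1 + c / x)"
proof -
  have "1 < 1 + c / x"
    using assms by simp
  then show ?thesis
    using assms(1) by simp
qed

lemma log_one_plus_div_strict_mono:
  fixes b c d x :: real
  assumes "1 < b" "0 \<le> c" "c < d" "0 < x"
  shows "log b (1 + c / x) < log b (1 + d / x)"
  using assms by (simp add: divide_strict_right_mono add_pos_nonneg)

lemma log_one_plus_div_strict_antimono: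
  fixes b c x y :: real
  assumes "1 < b" "0 < c" "0 < x" "x < y"
  shows "log b (1 + c / y) < log b (1 + c / x)"
  using assms by (simp add: divide_strict_left_mono add_pos_nonneg)

lemma one_minus_two_thirds_power_bounds:
  "0 < k \<Longrightarrow> 0 < 1 - (2/3::real) ^ k" "1 - (2/3::real) ^ k < 1"
  by (simp_all add: power_less_one_iff)

lemma log_div_eq_syrX_plus_syrC:
  assumes "n > 0" and "A * 2 ^ (L + r) + 2 ^ (L + 1) = 3 ^ (L + 1) * (real n + 1)"
  shows "log 2 (A / real n) = syrX L r + syrC L n"
proof -
  define a b q where "a = (3::real) ^ (L + 1)" and "b = (2::real) ^ (L + r)"
    and "q = (2/3::real) ^ (L + 1)"
  have "a * q = 2 ^ (L + 1)"
    unfolding a_def q_def by (simp flip: power_mult_distrib)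
  then have "A * b + a * q = a * (real n + 1)"
    using assms(2) unfolding a_def[symmetric] b_def[symmetric] by simp
  moreover have "0 < a" "0 < b"
    unfolding a_def b_def by simp_all
  ultimately have "A / real n = a / b * (1 + (1 - q) / real n)"
    using assms(1) by (simp add: field_simps)
  moreover have "0 < 1 + (1 - q) / real n"
    using one_minus_two_thirds_power_bounds(1)[of "L + 1"] assms(1)
    unfolding q_def[symmetric] by (simp add: add_pos_pos)
  ultimately have "log 2 (A / real n) = log 2 (a / b) + log 2 (1 + (1 - q) / real n)"
    using \<open>0 < a\<close> \<open>0 < b\<close> by (simp only:) (rule log_mult_pos; simp)
  then show ?thesis
    unfolding a_def b_def q_def log_power_div_power_eq_syrX syrC_def .
qed

lemma syrC_pos: "n > 0 \<Longrightarrow> 0 < syrC L n"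
  unfolding syrC_def using one_minus_two_thirds_power_bounds(1)[of "L + 1"]
  by (intro log_one_plus_div_pos) simp_all

lemma syrC_less_log: "n > 0 \<Longrightarrow> syrC L n < log 2 (1 + 1 / real n)"
  unfolding syrC_def using one_minus_two_thirds_power_bounds[of "L + 1"]
  by (intro log_one_plus_div_strict_mono) simp_all

lemma syrC_strict_antimono: "0 < n \<Longrightarrow> n < m \<Longrightarrow> syrC L m < syrC L n"
  unfolding syrC_def using one_minus_two_thirds_power_bounds(1)[of "L + 1"]
  by (intro log_one_plus_div_strict_antimono) simp_all

theorem mainTheorem4:
  fixes n :: nat
  assumes "odd n" and "n > 0"
  shows "let L = v2 (n + 1) - 1;
             r = v2 (3 * (syracuse ^^ L) n + 1);
             n' = (syracuse ^^ (L + 1)) n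
         in log 2 (real n' / real n) = syrX L r + syrC L n
            \<and> 0 < syrC L n \<and> syrC L n < log 2 (1 + 1 / real n)
            \<and> (\<forall>m::nat. odd m \<and> v2 (m + 1) - 1 = L \<and> n < m \<longrightarrow> syrC L m < syrC L n)"
proof -
  define L where "L = v2 (n + 1) - 1"
  define r where "r = v2 (3 * (syracuse ^^ L) n + 1)"
  have "v2 (n + 1) \<ge> 1"
    unfolding v2_def by (rule multiplicity_geI) (use assms(1) in auto)
  then have "2 ^ (L + 1) dvd n + 1"
    unfolding L_def by (simp add: v2_def multiplicity_dvd)
  then have "(syracuse ^^ (L + 1)) n * 2 ^ (L + r) + 2 ^ (L + 1) = 3 ^ (L + 1) * (n + 1)"
    unfolding r_def by (rule syracuse_iterate_closed_form)
  from arg_cong[where f = real, OF this]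
  have "real ((syracuse ^^ (L + 1)) n) * 2 ^ (L + r) + 2 ^ (L + 1) = 3 ^ (L + 1) * (real n + 1)"
    by (simp only: of_nat_add of_nat_mult of_nat_power of_nat_numeral of_nat_1)
  then show ?thesis
    unfolding Let_def L_def[symmetric] r_def[symmetric]
    using log_div_eq_syrX_plus_syrC[OF assms(2)] syrC_pos[OF assms(2)] syrC_less_log[OF assms(2)]
      syrC_strict_antimono[OF assms(2)]
    by blast
qed

end
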